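(* Let $q$ be a nonzero complex number with $q^4\neq1$, let $\zeta,\zeta',\zeta''$ be nonzero complex numbers different from $\pm1$, and let $a,b,c,d,e,f\in\mathbb{C}$ satisfy $ade=bcf$. For $\alpha,\beta\in\mathbb{C}$ put $R(\sigma,\tau,\alpha,\beta):=\alpha R_{\sigma,\tau}+\beta R'_{\sigma,\tau}$. Then, as maps $V(\zeta)\otimes V(\zeta')\otimes V(\zeta'')\to V(\zeta'')\otimes V(\zeta')\otimes V(\zeta)$, \[\bigl(R(\zeta',\zeta'',a,b)\otimes I_{V(\zeta)}\bigr)\bigl(I_{V(\zeta')}\otimes R(\zeta,\zeta'',c,d)\bigr)\bigl(R(\zeta,\zeta',e,f)\otimes I_{V(\zeta'')}\bigr)\] \[=\bigl(I_{V(\zeta'')}\otimes R(\zeta,\zeta',e,f)\bigr)\bigl(R(\zeta,\zeta'',c,d)\otimes I_{V(\zeta')}\bigr)\bigl(I_{V(\zeta)}\otimes R(\zeta',\zeta'',a,b)\bigr).\]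
   Context: $V(\zeta)$ is the two-dimensional super vector space with basis $x$ (even), $y$ (odd), which carries the structure of the Kac module of $U_q(\mathfrak{gl}(1|1))$ (or $U_q(\mathfrak{sl}(1|1))$) with central element $W$ acting by $\zeta$; both sides above are module homomorphisms. For nonzero $\sigma,\tau$, with $x,y$ the basis of $V(\sigma)$ and $\tilde x,\tilde y$ that of $V(\tau)$, the even linear maps $R_{\sigma,\tau},R'_{\sigma,\tau}:V(\sigma)\otimes V(\tau)\to V(\tau)\otimes V(\sigma)$ are \[R_{\sigma,\tau}:\ x\otimes\tilde x\mapsto \tilde x\otimes x,\ x\otimes\tilde y\mapsto \sigma\,\tilde y\otimes x,\ y\otimes\tilde x\mapsto \tau\,\tilde x\otimes y+(1-\sigma^2)\,\tilde y\otimes x,\ y\otimes\tilde y\mapsto-\sigma\tau\,\tilde y\otimes y,\] \[R'_{\sigma,\tau}:\ x\otimes\tilde x\mapsto -\sigma\tau\,\tilde x\otimes x,\ x\otimes\tilde y\mapsto (1-\tau^2)\,\tilde x\otimes y-\tau\,\tilde y\otimes x,\ y\otimes\tilde x\mapsto-\sigma\,\tilde x\otimes y,\ y\otimes\tilde y\mapsto\tilde y\otimes y.\] $I_X$ denotes the identity of $X$. *)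

theory Defs
  imports Complex_Main
begin

text \<open>Basis of V(zeta): False = x (even), True = y (odd).
  A vector of V(s1) (x) V(s2) (x) V(s3) is its coefficient function on the basis
  tensors (b1,b2,b3).  An even linear map V(s) (x) V(t) -> V(t) (x) V(s) is given by
  its matrix M (i,j) (k,l) = coefficient of basis tensor (k,l) in the image of (i,j).\<close>

definition Rmat :: "complex \<Rightarrow> complex \<Rightarrow> bool \<times> bool \<Rightarrow> bool \<times> bool \<Rightarrow> complex" where
  "Rmat s t ij kl =
    (if ij = (False, False) \<and> kl = (False, False) then 1
     else if ij = (False, True) \<and> kl = (True, False) then s
     else if ij = (True, False) \<and> kl = (False, True) then t
     else if ij = (True, False) \<and> kl = (True, False) then 1 - s\<^sup>2
     else if ij = (True, True) \<and> kl = (True, True) then - s * t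
     else 0)"

definition Rmat' :: "complex \<Rightarrow> complex \<Rightarrow> bool \<times> bool \<Rightarrow> bool \<times> bool \<Rightarrow> complex" where
  "Rmat' s t ij kl =
    (if ij = (False, False) \<and> kl = (False, False) then - s * t
     else if ij = (False, True) \<and> kl = (False, True) then 1 - t\<^sup>2
     else if ij = (False, True) \<and> kl = (True, False) then - t
     else if ij = (True, False) \<and> kl = (False, True) then - s
     else if ij = (True, True) \<and> kl = (True, True) then 1
     else 0)"

definition Rcomb :: "complex \<Rightarrow> complex \<Rightarrow> complex \<Rightarrow> complex \<Rightarrow> bool \<times> bool \<Rightarrow> bool \<times> bool \<Rightarrow> complex" where
  "Rcomb s t \<alpha> \<beta> ij kl = \<alpha> * Rmat s t ij kl + \<beta> * Rmat' s t ij kl"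

text \<open>M (x) I acting on a triple tensor (M even, so no Koszul signs).\<close>
definition tensor_left :: "(bool \<times> bool \<Rightarrow> bool \<times> bool \<Rightarrow> complex) \<Rightarrow> (bool \<times> bool \<times> bool \<Rightarrow> complex) \<Rightarrow> (bool \<times> bool \<times> bool \<Rightarrow> complex)" where
  "tensor_left M u = (\<lambda>(k, l, m). \<Sum>i\<in>UNIV. \<Sum>j\<in>UNIV. M (i, j) (k, l) * u (i, j, m))"

text \<open>I (x) M acting on a triple tensor (M even, so no Koszul signs).\<close>
definition tensor_right :: "(bool \<times> bool \<Rightarrow> bool \<times> bool \<Rightarrow> complex) \<Rightarrow> (bool \<times> bool \<times> bool \<Rightarrow> complex) \<Rightarrow> (bool \<times> bool \<times> bool \<Rightarrow> complex)" where
  "tensor_right M u = (\<lambda>(k, l, m). \<Sum>j\<in>UNIV. \<Sum>n\<in>UNIV. M (j, n) (l, m) * u (k, j, n))"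

end

theory Submission
  imports Defs
begin

text \<open>Both sides of the Yang-Baxter equation are trilinear in the coefficient pairs (a, b),
  (c, d), (e, f), so the defect (left side minus right side) is a sum of eight terms, one for each
  choice of R or R' in the three slots. Six of these choices satisfy the Yang-Baxter equation on
  their own; the remaining two, R R' R with coefficient a d e and R' R R' with coefficient b c f,
  have opposite defects. The total defect is therefore (a d e - b c f) times a single defect.\<close>

definition yang_baxter_defect ::
    "(bool \<times> bool \<Rightarrow> bool \<times> bool \<Rightarrow> complex) \<Rightarrow> (bool \<times> bool \<Rightarrow> bool \<times> bool \<Rightarrow> complex)
     \<Rightarrow> (bool \<times> bool \<Rightarrow> bool \<times> bool \<Rightarrow> complex) \<Rightarrow> (bool \<times> bool \<times> bool \<Rightarrow> complex)
     \<Rightarrow> bool \<times> bool \<times> bool \<Rightarrow> complex" where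
  "yang_baxter_defect M N P u x =
     tensor_left M (tensor_right N (tensor_left P u)) x - tensor_right P (tensor_left N (tensor_right M u)) x"

lemma tensor_left_add: "tensor_left M (\<lambda>x. u x + v x) = (\<lambda>x. tensor_left M u x + tensor_left M v x)"
  by (auto simp: tensor_left_def algebra_simps sum.distrib)

lemma tensor_left_scale: "tensor_left M (\<lambda>x. c * u x) = (\<lambda>x. c * tensor_left M u x)"
  by (auto simp: tensor_left_def algebra_simps sum_distrib_left)

lemma tensor_right_add: "tensor_right M (\<lambda>x. u x + v x) = (\<lambda>x. tensor_right M u x + tensor_right M v x)"
  by (auto simp: tensor_right_def algebra_simps sum.distrib)

lemma tensor_right_scale: "tensor_right M (\<lambda>x. c * u x) = (\<lambda>x. c * tensor_right M u x)"
  by (auto simp: tensor_right_def algebra_simps sum_distrib_left)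

lemma tensor_left_lincomb:
  "tensor_left (\<lambda>ij kl. \<alpha> * M ij kl + \<beta> * N ij kl) u = (\<lambda>x. \<alpha> * tensor_left M u x + \<beta> * tensor_left N u x)"
  by (auto simp: tensor_left_def algebra_simps sum.distrib sum_distrib_left)

lemma tensor_right_lincomb:
  "tensor_right (\<lambda>ij kl. \<alpha> * M ij kl + \<beta> * N ij kl) u = (\<lambda>x. \<alpha> * tensor_right M u x + \<beta> * tensor_right N u x)"
  by (auto simp: tensor_right_def algebra_simps sum.distrib sum_distrib_left)

lemma yang_baxter_defect_trilinear:
  "yang_baxter_defect (\<lambda>ij kl. a * M ij kl + b * M' ij kl) (\<lambda>ij kl. c * N ij kl + d * N' ij kl)
     (\<lambda>ij kl. e * P ij kl + f * P' ij kl) u x =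
   a * c * e * yang_baxter_defect M N P u x + a * c * f * yang_baxter_defect M N P' u x +
   a * d * e * yang_baxter_defect M N' P u x + a * d * f * yang_baxter_defect M N' P' u x +
   b * c * e * yang_baxter_defect M' N P u x + b * c * f * yang_baxter_defect M' N P' u x +
   b * d * e * yang_baxter_defect M' N' P u x + b * d * f * yang_baxter_defect M' N' P' u x"
  by (simp add: yang_baxter_defect_def tensor_left_lincomb tensor_right_lincomb
      tensor_left_add tensor_left_scale tensor_right_add tensor_right_scale algebra_simps)

text \<open>Unfolding the tensor operators only at basis triples keeps the matrix entries at concrete
  indices; unfolding their definitions outright makes the computations below intractable.\<close>

lemma tensor_left_apply:
  "tensor_left M u (k, l, m) =
     M (False, False) (k, l) * u (False, False, m) + M (False, True) (k, l) * u (False, True, m) +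
     M (True, False) (k, l) * u (True, False, m) + M (True, True) (k, l) * u (True, True, m)"
  by (simp add: tensor_left_def UNIV_bool)

lemma tensor_right_apply:
  "tensor_right M u (k, l, m) =
     M (False, False) (l, m) * u (k, False, False) + M (False, True) (l, m) * u (k, False, True) +
     M (True, False) (l, m) * u (k, True, False) + M (True, True) (l, m) * u (k, True, True)"
  by (simp add: tensor_right_def UNIV_bool)

lemma yang_baxter_defect_Rmat:
  "yang_baxter_defect (Rmat r s) (Rmat p s) (Rmat p r) u (k, l, m) = 0"
  by (cases k; cases l; cases m;
      simp add: yang_baxter_defect_def tensor_left_apply tensor_right_apply Rmat_def; algebra)

lemma yang_baxter_defect_Rmat':
  "yang_baxter_defect (Rmat' r s) (Rmat' p s) (Rmat' p r) u (k, l, m) = 0"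
  by (cases k; cases l; cases m;
      simp add: yang_baxter_defect_def tensor_left_apply tensor_right_apply Rmat'_def; algebra)

lemma yang_baxter_defect_mixed:
  "yang_baxter_defect (Rmat r s) (Rmat p s) (Rmat' p r) u (k, l, m) = 0"
  "yang_baxter_defect (Rmat r s) (Rmat' p s) (Rmat' p r) u (k, l, m) = 0"
  "yang_baxter_defect (Rmat' r s) (Rmat p s) (Rmat p r) u (k, l, m) = 0"
  "yang_baxter_defect (Rmat' r s) (Rmat' p s) (Rmat p r) u (k, l, m) = 0"
  by (cases k; cases l; cases m;
      simp add: yang_baxter_defect_def tensor_left_apply tensor_right_apply Rmat_def Rmat'_def; algebra)+

lemma yang_baxter_defect_cancel:
  "yang_baxter_defect (Rmat r s) (Rmat' p s) (Rmat p r) u (k, l, m) +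
   yang_baxter_defect (Rmat' r s) (Rmat p s) (Rmat' p r) u (k, l, m) = 0"
  by (cases k; cases l; cases m;
      simp add: yang_baxter_defect_def tensor_left_apply tensor_right_apply Rmat_def Rmat'_def; algebra)

lemma Rcomb_yang_baxter:
  assumes "a * d * e = b * c * f"
  shows "tensor_left (Rcomb r s a b) \<circ> tensor_right (Rcomb p s c d) \<circ> tensor_left (Rcomb p r e f)
       = tensor_right (Rcomb p r e f) \<circ> tensor_left (Rcomb p s c d) \<circ> tensor_right (Rcomb r s a b)"
proof -
  have "yang_baxter_defect (Rcomb r s a b) (Rcomb p s c d) (Rcomb p r e f) u (k, l, m) = 0" for u k l m
  proof -
    have "yang_baxter_defect (Rcomb r s a b) (Rcomb p s c d) (Rcomb p r e f) u (k, l, m)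
        = a * d * e * (yang_baxter_defect (Rmat r s) (Rmat' p s) (Rmat p r) u (k, l, m) +
                       yang_baxter_defect (Rmat' r s) (Rmat p s) (Rmat' p r) u (k, l, m))"
      unfolding Rcomb_def[abs_def] yang_baxter_defect_trilinear
      by (simp add: yang_baxter_defect_Rmat yang_baxter_defect_Rmat' yang_baxter_defect_mixed
          assms distrib_left)
    also have "\<dots> = 0"
      unfolding yang_baxter_defect_cancel by simp
    finally show ?thesis .
  qed
  then show ?thesis
    by (auto simp: fun_eq_iff yang_baxter_defect_def)
qed

theorem theorem6p2:
  fixes q \<zeta> \<zeta>' \<zeta>'' a b c d e f :: complex
  assumes "q \<noteq> 0" and "q ^ 4 \<noteq> 1"
    and "\<zeta> \<noteq> 0" and "\<zeta> \<noteq> 1" and "\<zeta> \<noteq> -1"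
    and "\<zeta>' \<noteq> 0" and "\<zeta>' \<noteq> 1" and "\<zeta>' \<noteq> -1"
    and "\<zeta>'' \<noteq> 0" and "\<zeta>'' \<noteq> 1" and "\<zeta>'' \<noteq> -1"
    and "a * d * e = b * c * f"
  shows "tensor_left (Rcomb \<zeta>' \<zeta>'' a b) \<circ> tensor_right (Rcomb \<zeta> \<zeta>'' c d) \<circ> tensor_left (Rcomb \<zeta> \<zeta>' e f)
       = tensor_right (Rcomb \<zeta> \<zeta>' e f) \<circ> tensor_left (Rcomb \<zeta> \<zeta>'' c d) \<circ> tensor_right (Rcomb \<zeta>' \<zeta>'' a b)"
  using \<open>a * d * e = b * c * f\<close> by (rule Rcomb_yang_baxter)

end
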